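(* Let $M$ be a duplicial module in a pre-additive category. For all $n\ge0$, $$\pi_n=\kappa_n^n-b_{n+1}\kappa_{n+1}^n d_n .$$
   Context: Let $\mathcal A$ be a pre-additive category. Let $\Lambda_+$ be the category with objects $[n]$, $n\ge0$, where $\Lambda_+([m],[n])$ is the set of weakly monotone $f:\mathbb Z\to\mathbb Z$ with $f(j+m+1)=f(j)+n+1$ for all $j$ and $f(0)\ge0$. Define $\varepsilon^n_i:[n-1]\to[n]$ ($n\ge1$, $0\le i\le n$) by $\varepsilon^n_i(j)=j$ for $0\le j<i$, $j+1$ for $i\le j\le n-1$, and $\eta^n_i:[n+1]\to[n]$ ($0\le i\le n+1$) by $\eta^n_i(j)=j$ for $0\le j\le i$, $j-1$ for $i<j\le n+1$. A duplicial module is a functor $M:\Lambda_+^{op}\to\mathcal A$; $M_n=M([n])$, $\partial_{n,i}=M(\varepsilon^n_i):M_n\to M_{n-1}$, $s_{n,i}=M(\eta^n_i):M_n\to M_{n+1}$. Convention $M_{-1}=0$, maps into/out of it zero. Define $b_n=\sum_{i=0}^n(-1)^i\partial_{n,i}$ ($b_0=0$), $d_n=\sum_{i=0}^{n+1}(-1)^is_{n,i}$, the Karoubi operator $\kappa_n=(-1)^n(\partial_{n+1,0}s_{n,n+1}-s_{n-1,n}\partial_{n,0})$ (so $\kappa_0=\partial_{1,0}s_{0,1}$), and the Dwyer–Kan operator $\pi_n=(-1)^n\partial_{n+1,0}\kappa_{n+1}^n s_{n,n+1}:M_n\to M_n$. *)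

theory Defs
  imports Main
begin

record ('o, 'm) preadd_cat =
  Obj   :: "'o set"
  Hom   :: "'o \<Rightarrow> 'o \<Rightarrow> 'm set"
  comp  :: "'m \<Rightarrow> 'm \<Rightarrow> 'm"      (* comp g f = g after f *)
  ident :: "'o \<Rightarrow> 'm"
  zer   :: "'o \<Rightarrow> 'o \<Rightarrow> 'm"
  add   :: "'m \<Rightarrow> 'm \<Rightarrow> 'm"
  neg   :: "'m \<Rightarrow> 'm"

definition preadditive :: "('o, 'm) preadd_cat \<Rightarrow> bool" where
  "preadditive C \<longleftrightarrow>
     (\<forall>a b a' b'. a \<in> Obj C \<longrightarrow> b \<in> Obj C \<longrightarrow> a' \<in> Obj C \<longrightarrow> b' \<in> Obj C \<longrightarrow>
         Hom C a b \<inter> Hom C a' b' \<noteq> {} \<longrightarrow> a = a' \<and> b = b') \<and>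
     (\<forall>a. a \<in> Obj C \<longrightarrow> ident C a \<in> Hom C a a) \<and>
     (\<forall>a b c f g. a \<in> Obj C \<longrightarrow> b \<in> Obj C \<longrightarrow> c \<in> Obj C \<longrightarrow>
         f \<in> Hom C a b \<longrightarrow> g \<in> Hom C b c \<longrightarrow> comp C g f \<in> Hom C a c) \<and>
     (\<forall>a b c d f g h. a \<in> Obj C \<longrightarrow> b \<in> Obj C \<longrightarrow> c \<in> Obj C \<longrightarrow> d \<in> Obj C \<longrightarrow>
         f \<in> Hom C a b \<longrightarrow> g \<in> Hom C b c \<longrightarrow> h \<in> Hom C c d \<longrightarrow>
         comp C h (comp C g f) = comp C (comp C h g) f) \<and>
     (\<forall>a b f. a \<in> Obj C \<longrightarrow> b \<in> Obj C \<longrightarrow> f \<in> Hom C a b \<longrightarrow>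
         comp C (ident C b) f = f \<and> comp C f (ident C a) = f) \<and>
     (\<forall>a b. a \<in> Obj C \<longrightarrow> b \<in> Obj C \<longrightarrow>
         zer C a b \<in> Hom C a b \<and>
         (\<forall>f g. f \<in> Hom C a b \<longrightarrow> g \<in> Hom C a b \<longrightarrow> add C f g \<in> Hom C a b) \<and>
         (\<forall>f. f \<in> Hom C a b \<longrightarrow> neg C f \<in> Hom C a b) \<and>
         (\<forall>f g h. f \<in> Hom C a b \<longrightarrow> g \<in> Hom C a b \<longrightarrow> h \<in> Hom C a b \<longrightarrow>
             add C (add C f g) h = add C f (add C g h)) \<and>
         (\<forall>f g. f \<in> Hom C a b \<longrightarrow> g \<in> Hom C a b \<longrightarrow> add C f g = add C g f) \<and>
         (\<forall>f. f \<in> Hom C a b \<longrightarrow> add C (zer C a b) f = f) \<and>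
         (\<forall>f. f \<in> Hom C a b \<longrightarrow> add C (neg C f) f = zer C a b)) \<and>
     (\<forall>a b c f f' g. a \<in> Obj C \<longrightarrow> b \<in> Obj C \<longrightarrow> c \<in> Obj C \<longrightarrow>
         f \<in> Hom C a b \<longrightarrow> f' \<in> Hom C a b \<longrightarrow> g \<in> Hom C b c \<longrightarrow>
         comp C g (add C f f') = add C (comp C g f) (comp C g f')) \<and>
     (\<forall>a b c f g g'. a \<in> Obj C \<longrightarrow> b \<in> Obj C \<longrightarrow> c \<in> Obj C \<longrightarrow>
         f \<in> Hom C a b \<longrightarrow> g \<in> Hom C b c \<longrightarrow> g' \<in> Hom C b c \<longrightarrow>
         comp C (add C g g') f = add C (comp C g f) (comp C g' f))"

text \<open>Morphisms [m] -> [n]: weakly monotone f : int -> int with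
  f(j+m+1) = f(j)+n+1 and f(0) >= 0; composition is function composition.\<close>

definition lam_hom :: "nat \<Rightarrow> nat \<Rightarrow> (int \<Rightarrow> int) \<Rightarrow> bool" where
  "lam_hom m n f \<longleftrightarrow> mono f \<and> (\<forall>j. f (j + int m + 1) = f j + int n + 1) \<and> f 0 \<ge> 0"

definition per_ext :: "nat \<Rightarrow> nat \<Rightarrow> (int \<Rightarrow> int) \<Rightarrow> int \<Rightarrow> int" where
  "per_ext m n g j = g (j mod (int m + 1)) + (j div (int m + 1)) * (int n + 1)"

definition eps :: "nat \<Rightarrow> nat \<Rightarrow> int \<Rightarrow> int" where
  "eps n i = per_ext (n - 1) n (\<lambda>j. if j < int i then j else j + 1)"

definition eta :: "nat \<Rightarrow> nat \<Rightarrow> int \<Rightarrow> int" where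
  "eta n i = per_ext (n + 1) n (\<lambda>j. if j \<le> int i then j else j - 1)"

text \<open>A duplicial module is a functor Lambda_+^op -> C: objects M n, and
  Mm m n f = M(f) : M n -> M m for f : [m] -> [n].\<close>

definition duplicial :: "('o, 'm) preadd_cat \<Rightarrow> (nat \<Rightarrow> 'o) \<Rightarrow>
    (nat \<Rightarrow> nat \<Rightarrow> (int \<Rightarrow> int) \<Rightarrow> 'm) \<Rightarrow> bool" where
  "duplicial C M Mm \<longleftrightarrow>
     (\<forall>n. M n \<in> Obj C) \<and>
     (\<forall>m n f. lam_hom m n f \<longrightarrow> Mm m n f \<in> Hom C (M n) (M m)) \<and>
     (\<forall>n. Mm n n id = ident C (M n)) \<and>
     (\<forall>l m n f g. lam_hom l m f \<longrightarrow> lam_hom m n g \<longrightarrow>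
         Mm l n (g \<circ> f) = comp C (Mm l m f) (Mm m n g))"

definition face where "face C M Mm n i = Mm (n - 1) n (eps n i)"
definition degen where "degen C M Mm n i = Mm (n + 1) n (eta n i)"

definition sgnm :: "('o, 'm) preadd_cat \<Rightarrow> nat \<Rightarrow> 'm \<Rightarrow> 'm" where
  "sgnm C i x = (if even i then x else neg C x)"

fun hsum :: "('o, 'm) preadd_cat \<Rightarrow> 'o \<Rightarrow> 'o \<Rightarrow> (nat \<Rightarrow> 'm) \<Rightarrow> nat \<Rightarrow> 'm" where
  "hsum C a b f 0 = zer C a b"
| "hsum C a b f (Suc k) = add C (hsum C a b f k) (f k)"

fun mpow :: "('o, 'm) preadd_cat \<Rightarrow> 'o \<Rightarrow> 'm \<Rightarrow> nat \<Rightarrow> 'm" where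
  "mpow C a f 0 = ident C a"
| "mpow C a f (Suc k) = comp C f (mpow C a f k)"

text \<open>b_n = sum_{i=0}^n (-1)^i \<partial>_{n,i} : M_n -> M_{n-1} (used for n >= 1).\<close>
definition bdry where
  "bdry C M Mm n = hsum C (M n) (M (n - 1)) (\<lambda>i. sgnm C i (face C M Mm n i)) (Suc n)"

definition dcob where
  "dcob C M Mm n = hsum C (M n) (M (n + 1)) (\<lambda>i. sgnm C i (degen C M Mm n i)) (Suc (Suc n))"

text \<open>Karoubi operator; the term through M_{-1} = 0 vanishes for n = 0.\<close>
definition karoubi where
  "karoubi C M Mm n = sgnm C n
     (if n = 0 then comp C (face C M Mm 1 0) (degen C M Mm 0 1)
      else add C (comp C (face C M Mm (n + 1) 0) (degen C M Mm n (n + 1)))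
                 (neg C (comp C (degen C M Mm (n - 1) n) (face C M Mm n 0))))"

definition dwyer_kan where
  "dwyer_kan C M Mm n = sgnm C n
     (comp C (face C M Mm (n + 1) 0)
        (comp C (mpow C (M (n + 1)) (karoubi C M Mm (n + 1)) n) (degen C M Mm n (n + 1))))"

end

theory Submission
  imports Defs
begin

text \<open>
  The Karoubi operator anticommutes with degeneracies and faces up to an index shift:
  \<kappa> s_j = -s_{j-1} \<kappa> and \<partial>_i \<kappa> = -\<kappa> \<partial>_{i+1} in the inner range, while \<kappa> s_0 = 0 and
  \<partial>_{n+1} \<kappa>_{n+1} = 0. Iterating, \<kappa>_{n+1}^n kills s_0, ..., s_{n-1} and turns s_n into
  \<plusminus>s_0 \<kappa>_n^n, so only two terms of \<kappa>_{n+1}^n d_n survive. Dually \<partial>_i \<kappa>_{n+1}^n = 0 for i \<ge> 2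
  and \<partial>_1 \<kappa>_{n+1}^n = \<plusminus>\<kappa>_n^n \<partial>_{n+1}, so only \<partial>_0 and \<partial>_1 contribute to b_{n+1}.
  Since \<partial>_0 s_0 = \<partial>_1 s_0 = id, the s_0-term is killed by b_{n+1}; since \<partial>_{n+1} s_{n+1} = id,
  the other term yields \<kappa>_n^n - \<pi>_n.
\<close>

section \<open>Morphisms of \<open>\<Lambda>\<^sub>+\<close>\<close>

lemma per_ext_shift: "per_ext m n h (j + int m + 1) = per_ext m n h j + int n + 1"
proof -
  have "(j + int m + 1) mod (int m + 1) = j mod (int m + 1)"
    by (metis add.assoc mod_add_self2)
  moreover have "(j + int m + 1) div (int m + 1) = j div (int m + 1) + 1"
    by (metis add.assoc div_add_self2 add_nonneg_pos of_nat_0_le_iff zero_less_one less_irrefl)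
  ultimately show ?thesis
    unfolding per_ext_def by (simp add: algebra_simps)
qed

lemma lam_hom_per_ext:
  assumes mono_on_period: "\<And>x y. 0 \<le> x \<Longrightarrow> x \<le> y \<Longrightarrow> y \<le> int m \<Longrightarrow> h x \<le> h y"
    and wrap: "h (int m) \<le> h 0 + int n + 1" and nonneg: "0 \<le> h 0"
  shows "lam_hom m n (per_ext m n h)"
  unfolding lam_hom_def
proof (intro conjI allI monoI)
  fix x y :: int
  assume "x \<le> y"
  define p where "p = int m + 1"
  have p: "p > 0" by (simp add: p_def)
  have rx: "0 \<le> x mod p" "x mod p \<le> int m" and ry: "0 \<le> y mod p" "y mod p \<le> int m"
    using pos_mod_bound[OF p] pos_mod_sign[OF p] by (auto simp: p_def)
  have qxy: "x div p \<le> y div p"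
    using \<open>x \<le> y\<close> p by (simp add: zdiv_mono1)
  have px: "per_ext m n h x = h (x mod p) + x div p * (int n + 1)"
    and py: "per_ext m n h y = h (y mod p) + y div p * (int n + 1)"
    by (simp_all add: per_ext_def p_def)
  show "per_ext m n h x \<le> per_ext m n h y"
  proof (cases "x div p = y div p")
    case True
    then have "x mod p - y mod p = x - y"
      by (simp flip: minus_div_mult_eq_mod)
    then have "x mod p \<le> y mod p"
      using \<open>x \<le> y\<close> by linarith
    then show ?thesis using px py True mono_on_period rx ry by simp
  next
    case False
    then have "(x div p + 1) * (int n + 1) \<le> y div p * (int n + 1)"
      using qxy by (intro mult_right_mono) simp_all
    moreover have "h (x mod p) \<le> h (int m)" "h 0 \<le> h (y mod p)"
      using mono_on_period rx ry by simp_all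
    ultimately show ?thesis using px py wrap by (simp add: algebra_simps)
  qed
next
  show "per_ext m n h (j + int m + 1) = per_ext m n h j + int n + 1" for j
    by (rule per_ext_shift)
  show "0 \<le> per_ext m n h 0"
    using nonneg by (simp add: per_ext_def)
qed

lemma lam_hom_shift:
  assumes "lam_hom m n f"
  shows "f (j + k * (int m + 1)) = f j + k * (int n + 1)"
proof -
  have shift_nat: "f (i + int l * (int m + 1)) = f i + int l * (int n + 1)" for i l
  proof (induction l)
    case (Suc l)
    have "f (i + int (Suc l) * (int m + 1)) = f ((i + int l * (int m + 1)) + int m + 1)"
      by (simp add: algebra_simps)
    also have "\<dots> = f (i + int l * (int m + 1)) + int n + 1"
      using assms by (simp add: lam_hom_def)
    finally show ?case using Suc by (simp add: algebra_simps)
  qed simp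
  show ?thesis
  proof (cases "k \<ge> 0")
    case True
    then show ?thesis using shift_nat[of j "nat k"] by simp
  next
    case False
    then show ?thesis
      using shift_nat[of "j + k * (int m + 1)" "nat (- k)"] by (simp add: algebra_simps)
  qed
qed

lemma lam_hom_eqI:
  assumes "lam_hom m n f" "lam_hom m n g"
    and eq: "\<And>j. 0 \<le> j \<Longrightarrow> j \<le> int m \<Longrightarrow> f j = g j"
  shows "f = g"
proof
  fix x
  define p where "p = int m + 1"
  have p: "p > 0" by (simp add: p_def)
  have "0 \<le> x mod p" "x mod p \<le> int m"
    using pos_mod_bound[OF p] pos_mod_sign[OF p] by (auto simp: p_def)
  then show "f x = g x"
    using lam_hom_shift[OF assms(1), of "x mod p" "x div p"]
      lam_hom_shift[OF assms(2), of "x mod p" "x div p"] eq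
    by (simp add: p_def mod_div_mult_eq)
qed

lemma lam_hom_comp: "lam_hom l m f \<Longrightarrow> lam_hom m n g \<Longrightarrow> lam_hom l n (g \<circ> f)"
  unfolding lam_hom_def mono_def by (auto intro: order_trans)

lemma lam_hom_id: "lam_hom n n id"
  unfolding lam_hom_def by (simp add: mono_def)

lemma lam_hom_eps: "lam_hom m (Suc m) (eps (Suc m) i)"
  unfolding eps_def diff_Suc_1 by (rule lam_hom_per_ext) auto

lemma lam_hom_eta: "lam_hom (Suc n) n (eta n i)"
  unfolding eta_def Suc_eq_plus1 by (rule lam_hom_per_ext) auto

lemma per_ext_two_periods:
  assumes "0 \<le> x" "x \<le> 2 * int m + 1"
  shows "per_ext m n h x = (if x \<le> int m then h x else h (x - int m - 1) + int n + 1)"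
proof (cases "x \<le> int m")
  case False
  then have "per_ext m n h (x - int m - 1) = h (x - int m - 1)"
    using assms by (simp add: per_ext_def)
  then show ?thesis
    using False per_ext_shift[of m n h "x - int m - 1"] by simp
qed (use assms in \<open>simp add: per_ext_def\<close>)

lemma eps_two_periods:
  "0 \<le> j \<Longrightarrow> j \<le> 2 * int n - 1 \<Longrightarrow> 1 \<le> n \<Longrightarrow> eps n i j =
    (if j < int n then (if j < int i then j else j + 1)
     else (if j - int n < int i then j - int n else j - int n + 1) + int n + 1)"
  unfolding eps_def by (subst per_ext_two_periods) auto

lemma eta_two_periods:
  "0 \<le> j \<Longrightarrow> j \<le> 2 * int n + 3 \<Longrightarrow> eta n i j =
    (if j \<le> int n + 1 then (if j \<le> int i then j else j - 1)
     else (if j - int n - 2 \<le> int i then j - int n - 2 else j - int n - 3) + int n + 1)"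
  unfolding eta_def by (subst per_ext_two_periods) auto

text \<open>On one period every composite below stays within two periods of each factor, so the
  explicit formulas \<open>eps_two_periods\<close> and \<open>eta_two_periods\<close> decide the identities.\<close>

lemmas lam_hom_generators = lam_hom_comp lam_hom_eps lam_hom_eta lam_hom_id

lemma eta_0_eps_0: "eta m 0 \<circ> eps (Suc m) 0 = id"
  by (rule lam_hom_eqI[of m m])
    (auto intro!: lam_hom_generators simp: eps_two_periods eta_two_periods)

lemma eta_0_eps_1: "eta m 0 \<circ> eps (Suc m) 1 = id"
  by (rule lam_hom_eqI[of m m])
    (auto intro!: lam_hom_generators simp: eps_two_periods eta_two_periods)

lemma eta_0_eps:
  "2 \<le> i \<Longrightarrow> i \<le> Suc (Suc k) \<Longrightarrow>
    eta (Suc k) 0 \<circ> eps (Suc (Suc k)) i = eps (Suc k) (i - 1) \<circ> eta k 0"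
  by (rule lam_hom_eqI[of "Suc k" "Suc k"])
    (auto intro!: lam_hom_generators simp: eps_two_periods eta_two_periods)

lemma eta_last_eps_last: "eta m (Suc m) \<circ> eps (Suc m) (Suc m) = id"
  by (rule lam_hom_eqI[of m m])
    (auto intro!: lam_hom_generators simp: eps_two_periods eta_two_periods)

lemma eta_0_eta_last_eps_0:
  "eta m 0 \<circ> eta (Suc m) (Suc (Suc m)) \<circ> eps (Suc (Suc m)) 0 = eta m (Suc m)"
  by (rule lam_hom_eqI[of "Suc m" m])
    (auto intro!: lam_hom_generators simp: eps_two_periods eta_two_periods)

lemma eta_eta_last_eps_0:
  "1 \<le> j \<Longrightarrow> j \<le> m \<Longrightarrow>
    eta m j \<circ> eta (Suc m) (Suc (Suc m)) \<circ> eps (Suc (Suc m)) 0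
      = eta m (Suc m) \<circ> eps (Suc m) 0 \<circ> eta m (j - 1)"
  by (rule lam_hom_eqI[of "Suc m" m])
    (auto intro!: lam_hom_generators simp: eps_two_periods eta_two_periods)

lemma eta_eps_0_eta_last:
  "1 \<le> j \<Longrightarrow> j \<le> Suc k \<Longrightarrow>
    eta (Suc k) j \<circ> eps (Suc (Suc k)) 0 \<circ> eta (Suc k) (Suc (Suc k))
      = eps (Suc k) 0 \<circ> eta k (Suc k) \<circ> eta (Suc k) (j - 1)"
  by (rule lam_hom_eqI[of "Suc (Suc k)" "Suc k"])
    (auto intro!: lam_hom_generators simp: eps_two_periods eta_two_periods)

lemma eta_last_eps_0_eps:
  "1 \<le> i \<Longrightarrow> i \<le> m \<Longrightarrow>
    eta (Suc m) (Suc (Suc m)) \<circ> eps (Suc (Suc m)) 0 \<circ> eps (Suc m) i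
      = eps (Suc m) (Suc i) \<circ> eta m (Suc m) \<circ> eps (Suc m) 0"
  by (rule lam_hom_eqI[of m "Suc m"])
    (auto intro!: lam_hom_generators simp: eps_two_periods eta_two_periods)

lemma eps_0_eta_last_eps:
  "1 \<le> i \<Longrightarrow> i \<le> Suc k \<Longrightarrow>
    eps (Suc (Suc k)) 0 \<circ> eta (Suc k) (Suc (Suc k)) \<circ> eps (Suc (Suc k)) i
      = eps (Suc (Suc k)) (Suc i) \<circ> eps (Suc k) 0 \<circ> eta k (Suc k)"
  by (rule lam_hom_eqI[of "Suc k" "Suc (Suc k)"])
    (auto intro!: lam_hom_generators simp: eps_two_periods eta_two_periods)

lemma eta_last_eps_0_eps_last:
  "eta (Suc m) (Suc (Suc m)) \<circ> eps (Suc (Suc m)) 0 \<circ> eps (Suc m) (Suc m)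
    = eps (Suc m) 0 \<circ> eta m (Suc m) \<circ> eps (Suc m) (Suc m)"
  by (rule lam_hom_eqI[of m "Suc m"])
    (auto intro!: lam_hom_generators simp: eps_two_periods eta_two_periods)

section \<open>Preadditive categories\<close>

locale preadditive_category =
  fixes C :: "('o, 'm) preadd_cat"
  assumes preadditive: "preadditive C"
begin

lemmas preadditive_axioms = preadditive[unfolded preadditive_def]

lemma ident_closed: "a \<in> Obj C \<Longrightarrow> ident C a \<in> Hom C a a"
  using preadditive_axioms[THEN conjunct2, THEN conjunct1] by blast

lemma comp_closed:
  "a \<in> Obj C \<Longrightarrow> b \<in> Obj C \<Longrightarrow> c \<in> Obj C \<Longrightarrow> f \<in> Hom C a b \<Longrightarrow> g \<in> Hom C b c \<Longrightarrow>
    comp C g f \<in> Hom C a c"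
  using preadditive_axioms[THEN conjunct2, THEN conjunct2, THEN conjunct1] by blast

lemma comp_assoc:
  "a \<in> Obj C \<Longrightarrow> b \<in> Obj C \<Longrightarrow> c \<in> Obj C \<Longrightarrow> d \<in> Obj C \<Longrightarrow>
    f \<in> Hom C a b \<Longrightarrow> g \<in> Hom C b c \<Longrightarrow> h \<in> Hom C c d \<Longrightarrow>
    comp C h (comp C g f) = comp C (comp C h g) f"
  using preadditive_axioms[THEN conjunct2, THEN conjunct2, THEN conjunct2, THEN conjunct1] by blast

lemma comp_ident_left: "a \<in> Obj C \<Longrightarrow> b \<in> Obj C \<Longrightarrow> f \<in> Hom C a b \<Longrightarrow> comp C (ident C b) f = f"
  using preadditive_axioms[THEN conjunct2, THEN conjunct2, THEN conjunct2, THEN conjunct2,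
      THEN conjunct1] by blast

lemma comp_ident_right: "a \<in> Obj C \<Longrightarrow> b \<in> Obj C \<Longrightarrow> f \<in> Hom C a b \<Longrightarrow> comp C f (ident C a) = f"
  using preadditive_axioms[THEN conjunct2, THEN conjunct2, THEN conjunct2, THEN conjunct2,
      THEN conjunct1] by blast

lemmas hom_abelian_group = preadditive_axioms[THEN conjunct2, THEN conjunct2, THEN conjunct2,
  THEN conjunct2, THEN conjunct2, THEN conjunct1, rule_format]

lemma zer_closed: "a \<in> Obj C \<Longrightarrow> b \<in> Obj C \<Longrightarrow> zer C a b \<in> Hom C a b"
  using hom_abelian_group[of a b] by meson

lemma add_closed:
  "a \<in> Obj C \<Longrightarrow> b \<in> Obj C \<Longrightarrow> f \<in> Hom C a b \<Longrightarrow> g \<in> Hom C a b \<Longrightarrow> add C f g \<in> Hom C a b"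
  using hom_abelian_group[of a b] by meson

lemma neg_closed: "a \<in> Obj C \<Longrightarrow> b \<in> Obj C \<Longrightarrow> f \<in> Hom C a b \<Longrightarrow> neg C f \<in> Hom C a b"
  using hom_abelian_group[of a b] by meson

lemma add_assoc:
  "a \<in> Obj C \<Longrightarrow> b \<in> Obj C \<Longrightarrow> f \<in> Hom C a b \<Longrightarrow> g \<in> Hom C a b \<Longrightarrow> h \<in> Hom C a b \<Longrightarrow>
    add C (add C f g) h = add C f (add C g h)"
  using hom_abelian_group[of a b] by meson

lemma add_commute:
  "a \<in> Obj C \<Longrightarrow> b \<in> Obj C \<Longrightarrow> f \<in> Hom C a b \<Longrightarrow> g \<in> Hom C a b \<Longrightarrow> add C f g = add C g f"
  using hom_abelian_group[of a b] by meson

lemma add_zer_left: "a \<in> Obj C \<Longrightarrow> b \<in> Obj C \<Longrightarrow> f \<in> Hom C a b \<Longrightarrow> add C (zer C a b) f = f"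
  using hom_abelian_group[of a b] by meson

lemma add_neg_left: "a \<in> Obj C \<Longrightarrow> b \<in> Obj C \<Longrightarrow> f \<in> Hom C a b \<Longrightarrow> add C (neg C f) f = zer C a b"
  using hom_abelian_group[of a b] by meson

lemma comp_add_distrib_left:
  "a \<in> Obj C \<Longrightarrow> b \<in> Obj C \<Longrightarrow> c \<in> Obj C \<Longrightarrow>
    f \<in> Hom C a b \<Longrightarrow> f' \<in> Hom C a b \<Longrightarrow> g \<in> Hom C b c \<Longrightarrow>
    comp C g (add C f f') = add C (comp C g f) (comp C g f')"
  using preadditive_axioms[THEN conjunct2, THEN conjunct2, THEN conjunct2, THEN conjunct2,
      THEN conjunct2, THEN conjunct2, THEN conjunct1] by blast

lemma comp_add_distrib_right:
  "a \<in> Obj C \<Longrightarrow> b \<in> Obj C \<Longrightarrow> c \<in> Obj C \<Longrightarrow>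
    f \<in> Hom C a b \<Longrightarrow> g \<in> Hom C b c \<Longrightarrow> g' \<in> Hom C b c \<Longrightarrow>
    comp C (add C g g') f = add C (comp C g f) (comp C g' f)"
  using preadditive_axioms[THEN conjunct2, THEN conjunct2, THEN conjunct2, THEN conjunct2,
      THEN conjunct2, THEN conjunct2, THEN conjunct2] by simp

lemma add_zer_right: "a \<in> Obj C \<Longrightarrow> b \<in> Obj C \<Longrightarrow> f \<in> Hom C a b \<Longrightarrow> add C f (zer C a b) = f"
  by (metis add_commute zer_closed add_zer_left)

lemma add_neg_right: "a \<in> Obj C \<Longrightarrow> b \<in> Obj C \<Longrightarrow> f \<in> Hom C a b \<Longrightarrow> add C f (neg C f) = zer C a b"
  by (metis add_commute neg_closed add_neg_left)

lemma neg_unique: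
  assumes "a \<in> Obj C" "b \<in> Obj C" "f \<in> Hom C a b" "g \<in> Hom C a b" "add C f g = zer C a b"
  shows "f = neg C g"
proof -
  have "f = add C f (add C g (neg C g))"
    using assms by (simp add: add_neg_right add_zer_right)
  also have "\<dots> = add C (add C f g) (neg C g)"
    using assms by (metis add_assoc neg_closed)
  also have "\<dots> = neg C g"
    using assms by (simp add: add_zer_left neg_closed)
  finally show ?thesis .
qed

lemma neg_neg: "a \<in> Obj C \<Longrightarrow> b \<in> Obj C \<Longrightarrow> f \<in> Hom C a b \<Longrightarrow> neg C (neg C f) = f"
  by (metis neg_unique neg_closed add_neg_right)

lemma neg_zer: "a \<in> Obj C \<Longrightarrow> b \<in> Obj C \<Longrightarrow> neg C (zer C a b) = zer C a b"
  by (metis neg_unique zer_closed add_zer_left)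

lemma neg_add:
  assumes "a \<in> Obj C" "b \<in> Obj C" "f \<in> Hom C a b" "g \<in> Hom C a b"
  shows "neg C (add C f g) = add C (neg C f) (neg C g)"
proof -
  have "add C (add C (neg C f) (neg C g)) (add C f g)
      = add C (neg C f) (add C (add C (neg C g) g) f)"
    using assms by (simp add: add_assoc add_closed neg_closed add_commute[of a b f g])
  also have "\<dots> = zer C a b"
    using assms by (simp add: add_neg_left add_zer_left)
  finally show ?thesis
    using assms by (intro neg_unique[symmetric]) (auto simp: add_closed neg_closed)
qed

lemma neg_diff:
  "a \<in> Obj C \<Longrightarrow> b \<in> Obj C \<Longrightarrow> f \<in> Hom C a b \<Longrightarrow> g \<in> Hom C a b \<Longrightarrow>
    neg C (add C f (neg C g)) = add C g (neg C f)"
  by (simp add: neg_add neg_neg neg_closed add_commute[of a b "neg C f"])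

lemma add_neg_diff:
  assumes "a \<in> Obj C" "b \<in> Obj C" "f \<in> Hom C a b" "g \<in> Hom C a b"
  shows "add C f (neg C (add C f (neg C g))) = g"
proof -
  have "add C f (neg C (add C f (neg C g))) = add C (add C f (neg C f)) g"
    using assms by (simp add: neg_diff add_commute[of a b g] add_assoc neg_closed)
  then show ?thesis
    using assms by (simp add: add_neg_right add_zer_left)
qed

lemma zer_if_add_self:
  assumes "a \<in> Obj C" "b \<in> Obj C" "f \<in> Hom C a b" "add C f f = f"
  shows "f = zer C a b"
proof -
  have "zer C a b = add C (neg C f) (add C f f)"
    using assms by (simp add: add_neg_left)
  also have "\<dots> = f"
    using assms by (metis add_assoc neg_closed add_neg_left add_zer_left)
  finally show ?thesis by simp
qed

lemma comp_zer_right: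
  "a \<in> Obj C \<Longrightarrow> b \<in> Obj C \<Longrightarrow> c \<in> Obj C \<Longrightarrow> g \<in> Hom C b c \<Longrightarrow> comp C g (zer C a b) = zer C a c"
  by (rule zer_if_add_self)
    (auto simp: comp_closed zer_closed comp_add_distrib_left[symmetric] add_zer_left)

lemma comp_zer_left:
  "a \<in> Obj C \<Longrightarrow> b \<in> Obj C \<Longrightarrow> c \<in> Obj C \<Longrightarrow> f \<in> Hom C a b \<Longrightarrow> comp C (zer C b c) f = zer C a c"
  by (rule zer_if_add_self)
    (auto simp: comp_closed zer_closed comp_add_distrib_right[symmetric] add_zer_left)

lemma comp_neg_right:
  assumes "a \<in> Obj C" "b \<in> Obj C" "c \<in> Obj C" "f \<in> Hom C a b" "g \<in> Hom C b c"
  shows "comp C g (neg C f) = neg C (comp C g f)"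
  using assms
  by (intro neg_unique[of a c])
    (auto simp: comp_closed neg_closed comp_add_distrib_left[symmetric] add_neg_left comp_zer_right)

lemma comp_neg_left:
  assumes "a \<in> Obj C" "b \<in> Obj C" "c \<in> Obj C" "f \<in> Hom C a b" "g \<in> Hom C b c"
  shows "comp C (neg C g) f = neg C (comp C g f)"
  using assms
  by (intro neg_unique[of a c])
    (auto simp: comp_closed neg_closed comp_add_distrib_right[symmetric] add_neg_left comp_zer_left)

lemma sgnm_closed: "a \<in> Obj C \<Longrightarrow> b \<in> Obj C \<Longrightarrow> f \<in> Hom C a b \<Longrightarrow> sgnm C i f \<in> Hom C a b"
  by (simp add: sgnm_def neg_closed)

lemma sgnm_neg: "sgnm C i (neg C f) = neg C (sgnm C i f)"
  by (simp add: sgnm_def)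

lemma sgnm_Suc: "a \<in> Obj C \<Longrightarrow> b \<in> Obj C \<Longrightarrow> f \<in> Hom C a b \<Longrightarrow> sgnm C (Suc i) f = neg C (sgnm C i f)"
  by (simp add: sgnm_def neg_neg)

lemma sgnm_zer: "a \<in> Obj C \<Longrightarrow> b \<in> Obj C \<Longrightarrow> sgnm C i (zer C a b) = zer C a b"
  by (simp add: sgnm_def neg_zer)

lemma comp_sgnm_left:
  "a \<in> Obj C \<Longrightarrow> b \<in> Obj C \<Longrightarrow> c \<in> Obj C \<Longrightarrow> f \<in> Hom C a b \<Longrightarrow> g \<in> Hom C b c \<Longrightarrow>
    comp C (sgnm C i g) f = sgnm C i (comp C g f)"
  by (simp add: sgnm_def comp_neg_left)

lemma comp_sgnm_right:
  "a \<in> Obj C \<Longrightarrow> b \<in> Obj C \<Longrightarrow> c \<in> Obj C \<Longrightarrow> f \<in> Hom C a b \<Longrightarrow> g \<in> Hom C b c \<Longrightarrow>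
    comp C g (sgnm C i f) = sgnm C i (comp C g f)"
  by (simp add: sgnm_def comp_neg_right)

lemma comp_sgnm_diff_left:
  "a \<in> Obj C \<Longrightarrow> b \<in> Obj C \<Longrightarrow> c \<in> Obj C \<Longrightarrow>
    f \<in> Hom C a b \<Longrightarrow> g \<in> Hom C b c \<Longrightarrow> g' \<in> Hom C b c \<Longrightarrow>
    comp C (sgnm C i (add C g (neg C g'))) f = sgnm C i (add C (comp C g f) (neg C (comp C g' f)))"
  by (simp add: comp_sgnm_left add_closed neg_closed comp_add_distrib_right comp_neg_left)

lemma comp_sgnm_diff_right:
  "a \<in> Obj C \<Longrightarrow> b \<in> Obj C \<Longrightarrow> c \<in> Obj C \<Longrightarrow>
    f \<in> Hom C a b \<Longrightarrow> f' \<in> Hom C a b \<Longrightarrow> g \<in> Hom C b c \<Longrightarrow>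
    comp C g (sgnm C i (add C f (neg C f'))) = sgnm C i (add C (comp C g f) (neg C (comp C g f')))"
  by (simp add: comp_sgnm_right add_closed neg_closed comp_add_distrib_left comp_neg_right)

lemma hsum_closed:
  "a \<in> Obj C \<Longrightarrow> b \<in> Obj C \<Longrightarrow> (\<And>i. i < k \<Longrightarrow> f i \<in> Hom C a b) \<Longrightarrow> hsum C a b f k \<in> Hom C a b"
  by (induction k) (auto simp: zer_closed add_closed)

lemma hsum_cong: "(\<And>i. i < k \<Longrightarrow> f i = g i) \<Longrightarrow> hsum C a b f k = hsum C a b g k"
  by (induction k) auto

lemma comp_hsum:
  "a \<in> Obj C \<Longrightarrow> b \<in> Obj C \<Longrightarrow> c \<in> Obj C \<Longrightarrow>
    (\<And>i. i < k \<Longrightarrow> f i \<in> Hom C a b) \<Longrightarrow> g \<in> Hom C b c \<Longrightarrow>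
    comp C g (hsum C a b f k) = hsum C a c (\<lambda>i. comp C g (f i)) k"
  by (induction k) (auto simp: comp_zer_right comp_add_distrib_left hsum_closed)

lemma hsum_comp:
  "a \<in> Obj C \<Longrightarrow> b \<in> Obj C \<Longrightarrow> c \<in> Obj C \<Longrightarrow>
    (\<And>i. i < k \<Longrightarrow> f i \<in> Hom C b c) \<Longrightarrow> g \<in> Hom C a b \<Longrightarrow>
    comp C (hsum C b c f k) g = hsum C a c (\<lambda>i. comp C (f i) g) k"
  by (induction k) (auto simp: comp_zer_left comp_add_distrib_right hsum_closed)

lemma hsum_last_two:
  assumes "a \<in> Obj C" "b \<in> Obj C" "\<And>i. i < k \<Longrightarrow> f i = zer C a b" "f k \<in> Hom C a b"
  shows "hsum C a b f (Suc (Suc k)) = add C (f k) (f (Suc k))"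
proof -
  have "hsum C a b f k = zer C a b"
    using assms by (induction k) (auto simp: add_zer_left zer_closed)
  then show ?thesis using assms by (simp add: add_zer_left)
qed

lemma hsum_first_two:
  "a \<in> Obj C \<Longrightarrow> b \<in> Obj C \<Longrightarrow> (\<And>i. 2 \<le> i \<Longrightarrow> i < Suc (Suc k) \<Longrightarrow> f i = zer C a b) \<Longrightarrow>
    f 0 \<in> Hom C a b \<Longrightarrow> f 1 \<in> Hom C a b \<Longrightarrow> hsum C a b f (Suc (Suc k)) = add C (f 0) (f 1)"
  by (induction k) (auto simp: add_zer_left add_zer_right add_closed)

lemma mpow_closed: "a \<in> Obj C \<Longrightarrow> f \<in> Hom C a a \<Longrightarrow> mpow C a f p \<in> Hom C a a"
  by (induction p) (auto simp: ident_closed comp_closed)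

context
  fixes a b :: 'o and A B :: 'm and X :: "nat \<Rightarrow> 'm" and N :: nat
  assumes objs: "a \<in> Obj C" "b \<in> Obj C"
    and A: "A \<in> Hom C b b" and B: "B \<in> Hom C a a" and X: "\<And>j. X j \<in> Hom C a b"
    and anticommute: "\<And>j. 1 \<le> j \<Longrightarrow> j \<le> N \<Longrightarrow> comp C A (X j) = neg C (comp C (X (j - 1)) B)"
begin

lemma mpow_comp_anticommute:
  "p \<le> j \<Longrightarrow> j \<le> N \<Longrightarrow> comp C (mpow C b A p) (X j) = sgnm C p (comp C (X (j - p)) (mpow C a B p))"
proof (induction p)
  case 0
  then show ?case
    using objs X by (simp add: sgnm_def comp_ident_left comp_ident_right)
next
  case (Suc p)
  have XBp: "comp C (X i) (mpow C a B q) \<in> Hom C a b" for i q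
    using objs B X by (intro comp_closed[of a a b] mpow_closed) auto
  have "comp C (mpow C b A (Suc p)) (X j) = comp C A (comp C (mpow C b A p) (X j))"
    using objs A X by (simp add: comp_assoc mpow_closed)
  also have "\<dots> = sgnm C p (comp C (comp C A (X (j - p))) (mpow C a B p))"
    using Suc objs A B X XBp by (simp add: comp_sgnm_right comp_assoc mpow_closed)
  also have "\<dots> = sgnm C p (neg C (comp C (X (j - Suc p)) (mpow C a B (Suc p))))"
    using Suc.prems objs A B X anticommute[of "j - p"]
    by (simp add: comp_neg_left comp_assoc comp_closed mpow_closed)
  also have "\<dots> = sgnm C (Suc p) (comp C (X (j - Suc p)) (mpow C a B (Suc p)))"
    by (simp only: sgnm_neg sgnm_Suc[OF objs XBp])
  finally show ?case .
qed

lemma mpow_comp_eq_zer: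
  assumes "comp C A (X 0) = zer C a b"
  shows "j < p \<Longrightarrow> j \<le> N \<Longrightarrow> comp C (mpow C b A p) (X j) = zer C a b"
proof (induction p)
  case (Suc p)
  have "comp C (mpow C b A (Suc p)) (X j) = comp C A (comp C (mpow C b A p) (X j))"
    using objs A X by (simp add: comp_assoc mpow_closed)
  also have "\<dots> = zer C a b"
  proof (cases "j < p")
    case True
    then show ?thesis using Suc objs A by (simp add: comp_zer_right)
  next
    case False
    then have "j = p" using Suc.prems by simp
    then have "comp C A (comp C (mpow C b A p) (X j))
        = sgnm C p (comp C (comp C A (X 0)) (mpow C a B p))"
      using Suc.prems objs A B X mpow_comp_anticommute[of p j]
      by (simp add: comp_sgnm_right comp_assoc comp_closed mpow_closed)
    then show ?thesis
      using assms objs B by (simp add: comp_zer_left sgnm_zer mpow_closed)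
  qed
  finally show ?case .
qed simp

end

context
  fixes a b :: 'o and A B :: 'm and Y :: "nat \<Rightarrow> 'm" and N :: nat
  assumes objs: "a \<in> Obj C" "b \<in> Obj C"
    and A: "A \<in> Hom C b b" and B: "B \<in> Hom C a a" and Y: "\<And>k. Y k \<in> Hom C b a"
    and anticommute: "\<And>k. 1 \<le> k \<Longrightarrow> k \<le> N \<Longrightarrow> comp C (Y k) A = neg C (comp C B (Y (Suc k)))"
begin

lemma comp_mpow_anticommute:
  "1 \<le> k \<Longrightarrow> k + p \<le> Suc N \<Longrightarrow>
    comp C (Y k) (mpow C b A p) = sgnm C p (comp C (mpow C a B p) (Y (k + p)))"
proof (induction p arbitrary: k)
  case 0
  then show ?case
    using objs Y by (simp add: sgnm_def comp_ident_left comp_ident_right)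
next
  case (Suc p)
  have BpY: "comp C (mpow C a B q) (Y i) \<in> Hom C b a" for i q
    using objs B Y by (intro comp_closed[of b a a] mpow_closed) auto
  have "comp C (Y k) (mpow C b A (Suc p)) = comp C (comp C (Y k) A) (mpow C b A p)"
    using objs A Y by (simp add: comp_assoc mpow_closed)
  also have "\<dots> = neg C (comp C B (comp C (Y (Suc k)) (mpow C b A p)))"
    using Suc.prems objs A B Y anticommute[of k]
    by (simp add: comp_assoc comp_neg_left comp_closed mpow_closed)
  also have "\<dots> = neg C (sgnm C p (comp C (mpow C a B (Suc p)) (Y (k + Suc p))))"
    using Suc objs B Y BpY by (simp add: comp_sgnm_right comp_assoc mpow_closed)
  also have "\<dots> = sgnm C (Suc p) (comp C (mpow C a B (Suc p)) (Y (k + Suc p)))"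
    by (simp only: sgnm_neg sgnm_Suc[OF objs(2,1) BpY])
  finally show ?case .
qed

lemma comp_mpow_eq_zer:
  assumes "comp C (Y (Suc N)) A = zer C b a"
  shows "1 \<le> k \<Longrightarrow> k \<le> Suc N \<Longrightarrow> Suc N < k + p \<Longrightarrow> comp C (Y k) (mpow C b A p) = zer C b a"
proof (induction p arbitrary: k)
  case (Suc p)
  have "comp C (Y k) (mpow C b A (Suc p)) = comp C (comp C (Y k) A) (mpow C b A p)"
    using objs A Y by (simp add: comp_assoc mpow_closed)
  also have "\<dots> = zer C b a"
  proof (cases "k = Suc N")
    case True
    then show ?thesis using assms objs A by (simp add: comp_zer_left mpow_closed)
  next
    case False
    then have "comp C (comp C (Y k) A) (mpow C b A p)
        = neg C (comp C B (comp C (Y (Suc k)) (mpow C b A p)))"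
      using Suc.prems objs A B Y anticommute[of k]
      by (simp add: comp_assoc comp_neg_left comp_closed mpow_closed)
    then show ?thesis
      using False Suc objs B by (simp add: comp_zer_right neg_zer)
  qed
  finally show ?case .
qed simp

end

end

section \<open>Duplicial modules\<close>

locale duplicial_module = preadditive_category C for C :: "('o, 'm) preadd_cat" +
  fixes M :: "nat \<Rightarrow> 'o" and Mm :: "nat \<Rightarrow> nat \<Rightarrow> (int \<Rightarrow> int) \<Rightarrow> 'm"
  assumes duplicial: "duplicial C M Mm"
begin

abbreviation H :: "nat \<Rightarrow> nat \<Rightarrow> 'm set" where "H a b \<equiv> Hom C (M a) (M b)"
abbreviation "F \<equiv> face C M Mm"
abbreviation "S \<equiv> degen C M Mm"
abbreviation "K \<equiv> karoubi C M Mm"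
abbreviation "Kpow m p \<equiv> mpow C (M m) (K m) p"
abbreviation "kfst n \<equiv> comp C (F (Suc n) 0) (S n (Suc n))"
abbreviation "ksnd n \<equiv> comp C (S n (Suc n)) (F (Suc n) 0)"

lemma M_obj [simp]: "M n \<in> Obj C"
  using duplicial by (simp add: duplicial_def)

lemma Mm_hom: "lam_hom a b f \<Longrightarrow> Mm a b f \<in> H b a"
  using duplicial by (simp add: duplicial_def)

lemma Mm_id: "Mm n n id = ident C (M n)"
  using duplicial by (simp add: duplicial_def)

lemma Mm_comp: "lam_hom a b f \<Longrightarrow> lam_hom b c g \<Longrightarrow> comp C (Mm a b f) (Mm b c g) = Mm a c (g \<circ> f)"
  using duplicial by (simp add: duplicial_def)

lemma Mm_comp3:
  assumes "lam_hom a b f" "lam_hom b c g" "lam_hom c d h"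
  shows "comp C (comp C (Mm a b f) (Mm b c g)) (Mm c d h) = Mm a d (h \<circ> g \<circ> f)"
    and "comp C (Mm a b f) (comp C (Mm b c g) (Mm c d h)) = Mm a d (h \<circ> g \<circ> f)"
  using assms by (simp_all add: Mm_comp lam_hom_comp o_assoc)

lemma face_eq_Mm: "F (Suc n) i = Mm n (Suc n) (eps (Suc n) i)"
  by (simp add: face_def)

lemma degen_eq_Mm: "S n i = Mm (Suc n) n (eta n i)"
  by (simp add: degen_def)

lemma face_hom [simp]: "F (Suc n) i \<in> H (Suc n) n"
  by (simp add: face_eq_Mm Mm_hom lam_hom_eps)

lemma degen_hom [simp]: "S n i \<in> H n (Suc n)"
  by (simp add: degen_eq_Mm Mm_hom lam_hom_eta)

lemma face_degen_hom [simp]: "comp C (F (Suc n) i) (S n j) \<in> H n n"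
  by (rule comp_closed[of _ "M (Suc n)"]) auto

lemma degen_face_hom [simp]: "comp C (S n j) (F (Suc n) i) \<in> H (Suc n) (Suc n)"
  by (rule comp_closed[of _ "M n"]) auto

lemma karoubi_Suc: "K (Suc m) = sgnm C (Suc m) (add C (kfst (Suc m)) (neg C (ksnd m)))"
  by (simp add: karoubi_def)

lemma karoubi_hom [simp]: "K n \<in> H n n"
  by (cases n) (simp_all add: karoubi_def karoubi_Suc sgnm_closed add_closed neg_closed)

lemma Kpow_hom [simp]: "Kpow m p \<in> H m m"
  by (simp add: mpow_closed)

lemma karoubi_Kpow_hom [simp]: "comp C (K m) (Kpow m p) \<in> H m m"
  using Kpow_hom[of m "Suc p"] by simp

lemma bdry_Suc:
  "bdry C M Mm (Suc n) = hsum C (M (Suc n)) (M n) (\<lambda>i. sgnm C i (F (Suc n) i)) (Suc (Suc n))"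
  by (simp add: bdry_def)

lemma bdry_hom [simp]: "bdry C M Mm (Suc n) \<in> H (Suc n) n"
  unfolding bdry_Suc by (rule hsum_closed) (auto simp: sgnm_closed)

lemmas Mm_simps = face_eq_Mm degen_eq_Mm Mm_comp3 lam_hom_eps lam_hom_eta

lemma face_0_degen_0: "comp C (F (Suc n) 0) (S n 0) = ident C (M n)"
  by (simp add: face_eq_Mm degen_eq_Mm Mm_comp lam_hom_eps lam_hom_eta eta_0_eps_0 Mm_id)

lemma face_1_degen_0: "comp C (F (Suc n) (Suc 0)) (S n 0) = ident C (M n)"
  using eta_0_eps_1 by (simp add: face_eq_Mm degen_eq_Mm Mm_comp lam_hom_eps lam_hom_eta Mm_id)

lemma face_last_degen_last: "comp C (F (Suc n) (Suc n)) (S n (Suc n)) = ident C (M n)"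
  by (simp add: face_eq_Mm degen_eq_Mm Mm_comp lam_hom_eps lam_hom_eta eta_last_eps_last Mm_id)

lemma face_degen_0:
  "2 \<le> i \<Longrightarrow> i \<le> Suc (Suc q) \<Longrightarrow>
    comp C (F (Suc (Suc q)) i) (S (Suc q) 0) = comp C (S q 0) (F (Suc q) (i - 1))"
  by (simp add: face_eq_Mm degen_eq_Mm Mm_comp lam_hom_eps lam_hom_eta eta_0_eps)

lemma karoubi_degen_0: "comp C (K (Suc m)) (S m 0) = zer C (M m) (M (Suc m))"
proof -
  have "comp C (kfst (Suc m)) (S m 0) = S m (Suc m)"
    by (simp add: Mm_simps eta_0_eta_last_eps_0)
  moreover have "comp C (ksnd m) (S m 0) = S m (Suc m)"
    by (simp add: Mm_simps eta_0_eps_0)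
  ultimately show ?thesis
    unfolding karoubi_Suc
    by (simp add: comp_sgnm_diff_left[of "M m" "M (Suc m)" "M (Suc m)"]
        add_neg_right[of "M m" "M (Suc m)"] sgnm_zer[of "M m" "M (Suc m)"])
qed

lemma karoubi_degen:
  assumes "1 \<le> j" "j \<le> m"
  shows "comp C (K (Suc m)) (S m j) = neg C (comp C (S m (j - 1)) (K m))"
proof -
  obtain k where m: "m = Suc k" using assms by (cases m) auto
  let ?s = "S m (j - 1)"
  have s_hom: "X \<in> H m m \<Longrightarrow> comp C ?s X \<in> H m (Suc m)" for X
    by (rule comp_closed[of _ "M m"]) auto
  have "comp C (kfst (Suc m)) (S m j) = comp C ?s (kfst m)"
    using eta_eta_last_eps_0[OF assms] by (simp add: Mm_simps)
  moreover have "comp C (ksnd m) (S m j) = comp C ?s (ksnd k)"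
    using eta_eps_0_eta_last[of j k] assms by (simp add: m Mm_simps)
  ultimately have "comp C (K (Suc m)) (S m j)
      = sgnm C (Suc m) (add C (comp C ?s (kfst m)) (neg C (comp C ?s (ksnd k))))"
    unfolding karoubi_Suc by (simp add: comp_sgnm_diff_left[of "M m" "M (Suc m)" "M (Suc m)"])
  also have "\<dots> = neg C (sgnm C m (add C (comp C ?s (kfst m)) (neg C (comp C ?s (ksnd k)))))"
    using s_hom[of "kfst m"] s_hom[of "ksnd k"]
    by (intro sgnm_Suc[of "M m" "M (Suc m)"]) (simp_all add: m add_closed neg_closed)
  also have "\<dots> = neg C (comp C ?s (K m))"
    unfolding m karoubi_Suc
    by (simp add: comp_sgnm_diff_right[of "M (Suc k)" "M (Suc k)" "M (Suc (Suc k))"])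
  finally show ?thesis .
qed

lemma face_karoubi:
  assumes "1 \<le> i" "i \<le> m"
  shows "comp C (F (Suc m) i) (K (Suc m)) = neg C (comp C (K m) (F (Suc m) (Suc i)))"
proof -
  obtain k where m: "m = Suc k" using assms by (cases m) auto
  let ?d = "F (Suc m) (Suc i)"
  have d_hom: "X \<in> H m m \<Longrightarrow> comp C X ?d \<in> H (Suc m) m" for X
    by (rule comp_closed[of _ "M m"]) auto
  have "comp C (F (Suc m) i) (kfst (Suc m)) = comp C (kfst m) ?d"
    using eta_last_eps_0_eps[OF assms] by (simp add: Mm_simps)
  moreover have "comp C (F (Suc m) i) (ksnd m) = comp C (ksnd k) ?d"
    using eps_0_eta_last_eps[of i k] assms by (simp add: m Mm_simps)
  ultimately have "comp C (F (Suc m) i) (K (Suc m))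
      = sgnm C (Suc m) (add C (comp C (kfst m) ?d) (neg C (comp C (ksnd k) ?d)))"
    unfolding karoubi_Suc by (simp add: comp_sgnm_diff_right[of "M (Suc m)" "M (Suc m)" "M m"])
  also have "\<dots> = neg C (sgnm C m (add C (comp C (kfst m) ?d) (neg C (comp C (ksnd k) ?d))))"
    using d_hom[of "kfst m"] d_hom[of "ksnd k"]
    by (intro sgnm_Suc[of "M (Suc m)" "M m"]) (simp_all add: m add_closed neg_closed)
  also have "\<dots> = neg C (comp C (K m) ?d)"
    unfolding m karoubi_Suc
    by (simp add: comp_sgnm_diff_left[of "M (Suc (Suc k))" "M (Suc k)" "M (Suc k)"])
  finally show ?thesis .
qed

lemma face_last_karoubi: "comp C (F (Suc m) (Suc m)) (K (Suc m)) = zer C (M (Suc m)) (M m)"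
proof -
  have "comp C (F (Suc m) (Suc m)) (kfst (Suc m)) = comp C (F (Suc m) (Suc m)) (ksnd m)"
    using eta_last_eps_0_eps_last[of m] by (simp add: Mm_simps)
  moreover have "comp C (F (Suc m) (Suc m)) (ksnd m) \<in> H (Suc m) m"
    by (rule comp_closed[of _ "M (Suc m)"]) auto
  ultimately show ?thesis
    unfolding karoubi_Suc
    by (simp add: comp_sgnm_diff_right[of "M (Suc m)" "M (Suc m)" "M m"]
        add_neg_right[of "M (Suc m)" "M m"] sgnm_zer[of "M (Suc m)" "M m"])
qed

lemma karoubi_pow_degen:
  "p \<le> j \<Longrightarrow> j \<le> m \<Longrightarrow>
    comp C (Kpow (Suc m) p) (S m j) = sgnm C p (comp C (S m (j - p)) (Kpow m p))"
  by (rule mpow_comp_anticommute[where X = "S m" and N = m]) (simp_all add: karoubi_degen)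

lemma karoubi_pow_degen_eq_zer:
  "j < p \<Longrightarrow> j \<le> m \<Longrightarrow> comp C (Kpow (Suc m) p) (S m j) = zer C (M m) (M (Suc m))"
  by (rule mpow_comp_eq_zer[where X = "S m" and N = m])
    (simp_all add: karoubi_degen karoubi_degen_0)

lemma face_karoubi_pow:
  "1 \<le> k \<Longrightarrow> k + p \<le> Suc m \<Longrightarrow>
    comp C (F (Suc m) k) (Kpow (Suc m) p) = sgnm C p (comp C (Kpow m p) (F (Suc m) (k + p)))"
  by (rule comp_mpow_anticommute[where Y = "F (Suc m)" and N = m]) (simp_all add: face_karoubi)

lemma face_karoubi_pow_eq_zer:
  "1 \<le> k \<Longrightarrow> k \<le> Suc m \<Longrightarrow> Suc m < k + p \<Longrightarrow>
    comp C (F (Suc m) k) (Kpow (Suc m) p) = zer C (M (Suc m)) (M m)"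
  by (rule comp_mpow_eq_zer[where Y = "F (Suc m)" and N = m])
    (simp_all add: face_karoubi face_last_karoubi)

lemma bdry_comp_two_faces:
  assumes x: "x \<in> Obj C" and g: "g \<in> Hom C x (M (Suc n))"
    and vanish: "\<And>i. 2 \<le> i \<Longrightarrow> i \<le> Suc n \<Longrightarrow> comp C (F (Suc n) i) g = zer C x (M n)"
  shows "comp C (bdry C M Mm (Suc n)) g
    = add C (comp C (F (Suc n) 0) g) (neg C (comp C (F (Suc n) 1) g))"
proof -
  have face_g: "comp C (F (Suc n) i) g \<in> Hom C x (M n)" for i
    using x g by (intro comp_closed[of _ "M (Suc n)"]) auto
  have "comp C (bdry C M Mm (Suc n)) g
      = hsum C x (M n) (\<lambda>i. comp C (sgnm C i (F (Suc n) i)) g) (Suc (Suc n))"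
    unfolding bdry_Suc using x g by (intro hsum_comp) (auto simp: sgnm_closed)
  also have "\<dots> = hsum C x (M n) (\<lambda>i. sgnm C i (comp C (F (Suc n) i) g)) (Suc (Suc n))"
    using x g by (intro hsum_cong) (simp add: comp_sgnm_left[of x "M (Suc n)" "M n"])
  also have "\<dots> = add C (sgnm C 0 (comp C (F (Suc n) 0) g)) (sgnm C 1 (comp C (F (Suc n) 1) g))"
    using x face_g vanish by (intro hsum_first_two) (auto simp: sgnm_closed sgnm_zer)
  finally show ?thesis
    by (simp add: sgnm_def)
qed

lemma bdry_degen_0_karoubi_pow:
  "comp C (bdry C M Mm (Suc n)) (comp C (S n 0) (Kpow n n)) = zer C (M n) (M n)"
proof -
  let ?g = "comp C (S n 0) (Kpow n n)"
  have g: "?g \<in> H n (Suc n)"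
    by (rule comp_closed[of _ "M n"]) auto
  have face_g: "comp C (F (Suc n) i) ?g = comp C (comp C (F (Suc n) i) (S n 0)) (Kpow n n)" for i
    by (simp add: comp_assoc[of "M n" "M n" "M (Suc n)" "M n"])
  have vanish: "comp C (F (Suc n) i) ?g = zer C (M n) (M n)" if i: "2 \<le> i" "i \<le> Suc n" for i
  proof -
    obtain q where n: "n = Suc q" using i by (cases n) auto
    have "comp C (F (Suc n) i) ?g = comp C (comp C (S q 0) (F (Suc q) (i - 1))) (Kpow n n)"
      using i face_g[of i] face_degen_0[of i q] by (simp add: n del: mpow.simps)
    also have "\<dots> = comp C (S q 0) (comp C (F (Suc q) (i - 1)) (Kpow n n))"
      by (simp add: n comp_assoc[of "M (Suc q)" "M (Suc q)" "M q" "M (Suc q)"] del: mpow.simps)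
    also have "\<dots> = zer C (M n) (M n)"
      using i face_karoubi_pow_eq_zer[of "i - 1" q "Suc q"]
      by (simp add: n comp_zer_right del: mpow.simps)
    finally show ?thesis .
  qed
  have "comp C (F (Suc n) 0) ?g = Kpow n n" "comp C (F (Suc n) 1) ?g = Kpow n n"
    using face_0_degen_0 face_1_degen_0 by (simp_all add: face_g comp_ident_left[of "M n" "M n"])
  then show ?thesis
    using bdry_comp_two_faces[OF M_obj g vanish] by (simp add: add_neg_right[of "M n" "M n"])
qed

lemma bdry_karoubi_pow_degen_last:
  "comp C (bdry C M Mm (Suc n)) (comp C (Kpow (Suc n) n) (S n (Suc n)))
    = add C (comp C (F (Suc n) 0) (comp C (Kpow (Suc n) n) (S n (Suc n))))
        (neg C (sgnm C n (Kpow n n)))"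
proof -
  let ?g = "comp C (Kpow (Suc n) n) (S n (Suc n))"
  have g: "?g \<in> H n (Suc n)"
    by (rule comp_closed[of _ "M (Suc n)"]) auto
  have face_g:
    "comp C (F (Suc n) i) ?g = comp C (comp C (F (Suc n) i) (Kpow (Suc n) n)) (S n (Suc n))" for i
    by (simp add: comp_assoc[of "M n" "M (Suc n)" "M (Suc n)" "M n"])
  have vanish: "comp C (F (Suc n) i) ?g = zer C (M n) (M n)" if "2 \<le> i" "i \<le> Suc n" for i
    using that face_karoubi_pow_eq_zer[of i n n]
    by (simp add: face_g comp_zer_left[of "M n" "M (Suc n)"])
  have "comp C (F (Suc n) 1) ?g
      = sgnm C n (comp C (Kpow n n) (comp C (F (Suc n) (Suc n)) (S n (Suc n))))"
    using face_karoubi_pow[of 1 n n]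
    by (simp add: face_g comp_sgnm_left[of "M n" "M (Suc n)" "M n"] comp_closed[of _ "M n"]
        comp_assoc[of "M n" "M (Suc n)" "M n" "M n"])
  also have "\<dots> = sgnm C n (Kpow n n)"
    by (simp add: face_last_degen_last comp_ident_right[of "M n" "M n"])
  finally show ?thesis
    using bdry_comp_two_faces[OF M_obj g vanish] by simp
qed

lemma karoubi_pow_dcob:
  "comp C (Kpow (Suc n) n) (dcob C M Mm n)
    = add C (sgnm C n (comp C (Kpow (Suc n) n) (S n n)))
            (sgnm C (Suc n) (comp C (Kpow (Suc n) n) (S n (Suc n))))"
proof -
  have hom: "comp C (Kpow (Suc n) n) (S n j) \<in> H n (Suc n)" for j
    by (rule comp_closed[of _ "M (Suc n)"]) auto
  have "comp C (Kpow (Suc n) n) (dcob C M Mm n)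
      = hsum C (M n) (M (Suc n)) (\<lambda>i. comp C (Kpow (Suc n) n) (sgnm C i (S n i))) (Suc (Suc n))"
    unfolding dcob_def Suc_eq_plus1[symmetric] by (rule comp_hsum) (auto simp: sgnm_closed)
  also have "\<dots>
      = hsum C (M n) (M (Suc n)) (\<lambda>i. sgnm C i (comp C (Kpow (Suc n) n) (S n i))) (Suc (Suc n))"
    by (rule hsum_cong) (simp add: comp_sgnm_right[of "M n" "M (Suc n)" "M (Suc n)"])
  also have "\<dots> = add C (sgnm C n (comp C (Kpow (Suc n) n) (S n n)))
                         (sgnm C (Suc n) (comp C (Kpow (Suc n) n) (S n (Suc n))))"
    by (rule hsum_last_two) (auto simp: karoubi_pow_degen_eq_zer sgnm_zer sgnm_closed hom)
  finally show ?thesis .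
qed

lemma dwyer_kan_Suc:
  "dwyer_kan C M Mm n = sgnm C n (comp C (F (Suc n) 0) (comp C (Kpow (Suc n) n) (S n (Suc n))))"
  by (simp add: dwyer_kan_def)

lemma dwyer_kan_hom [simp]: "dwyer_kan C M Mm n \<in> H n n"
  unfolding dwyer_kan_Suc
  by (intro sgnm_closed comp_closed[of _ "M (Suc n)"]
      comp_closed[of _ "M (Suc n)" _ _ "S n (Suc n)"]) auto

lemma bdry_karoubi_pow_dcob:
  "comp C (bdry C M Mm (Suc n)) (comp C (Kpow (Suc n) n) (dcob C M Mm n))
    = add C (Kpow n n) (neg C (dwyer_kan C M Mm n))"
proof -
  let ?T = "comp C (F (Suc n) 0) (comp C (Kpow (Suc n) n) (S n (Suc n)))"
  have T: "?T \<in> H n n"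
    by (intro comp_closed[of _ "M (Suc n)"] comp_closed[of _ "M (Suc n)" _ _ "S n (Suc n)"]) auto
  have vanish: "comp C (bdry C M Mm (Suc n)) (comp C (Kpow (Suc n) n) (S n n)) = zer C (M n) (M n)"
    using karoubi_pow_degen[of n n n]
    by (simp add: comp_sgnm_right[of "M n" "M (Suc n)" "M n"] comp_closed[of _ "M n"]
        bdry_degen_0_karoubi_pow sgnm_zer)
  have "comp C (bdry C M Mm (Suc n)) (comp C (Kpow (Suc n) n) (dcob C M Mm n))
      = add C (zer C (M n) (M n)) (sgnm C (Suc n) (add C ?T (neg C (sgnm C n (Kpow n n)))))"
    unfolding karoubi_pow_dcob
    by (simp add: comp_add_distrib_left[of "M n" "M (Suc n)" "M n"]
        comp_sgnm_right[of "M n" "M (Suc n)" "M n"] sgnm_closed sgnm_zer comp_closed[of _ "M (Suc n)"] vanish bdry_karoubi_pow_degen_last)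
  also have "\<dots> = add C (Kpow n n) (neg C (sgnm C n ?T))"
  proof (cases "even n")
    case True
    then show ?thesis
      using T by (simp add: sgnm_def add_zer_left add_closed neg_closed neg_diff[of "M n" "M n"])
  next
    case False
    then show ?thesis
      using T by (simp add: sgnm_def add_zer_left add_closed neg_closed neg_neg[of "M n" "M n"]
          add_commute[of "M n" "M n" ?T])
  qed
  finally show ?thesis
    by (simp add: dwyer_kan_Suc)
qed

end

theorem mainTheorem14:
  fixes C :: "('o, 'm) preadd_cat" and M :: "nat \<Rightarrow> 'o"
    and Mm :: "nat \<Rightarrow> nat \<Rightarrow> (int \<Rightarrow> int) \<Rightarrow> 'm" and n :: nat
  assumes "preadditive C" and "duplicial C M Mm"
  shows "dwyer_kan C M Mm n =
           add C (mpow C (M n) (karoubi C M Mm n) n)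
                 (neg C (comp C (bdry C M Mm (n + 1))
                     (comp C (mpow C (M (n + 1)) (karoubi C M Mm (n + 1)) n) (dcob C M Mm n))))"
proof -
  interpret duplicial_module C M Mm
    using assms
    by (simp add: duplicial_module_def duplicial_module_axioms_def preadditive_category_def)
  show ?thesis
    using bdry_karoubi_pow_dcob[of n] add_neg_diff[of "M n" "M n" "Kpow n n" "dwyer_kan C M Mm n"]
    by simp
qed

end
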